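(* Let $\mathcal{S}=(X,\xrightarrow{\Sigma},\le)$ be a positive very-WSTS and let $x,y\in X$. Then $y$ is repeatedly coverable from $x$ if and only if there exist states $c,d$ of the stuttering automaton $\mathcal{A}_{\downarrow x}$ and $w\in\Sigma^+$ such that $d$ can be reached from $c$ by reading $w$ in $\mathcal{A}_{\downarrow x}$, $\mathrm{numaccel}(c)=\mathrm{numaccel}(d)$, $w$ is positive, and $y\in\mathrm{ideal}(c)$.
   Context: A (labeled, ordered) transition system is $\mathcal{S}=(X,\xrightarrow{\Sigma},\le)$: $X$ a set, $\Sigma$ a finite alphabet, $\xrightarrow{a}\subseteq X\times X$, $\le$ a quasi-ordering; relations extend to words ($x\xrightarrow{+}y$ means $x\xrightarrow{w}y$ for some $w\in\Sigma^+$, $x\xrightarrow{*}y$ for some $w\in\Sigma^*$). $\mathrm{Post}(x,w)=\{y:x\xrightarrow{w}y\}$, extended to sets by union; $\downarrow D=\{x:\exists y\in D,\,x\le y\}$. WSTS: $\le$ wqo and monotone ($x\xrightarrow{a}y$, $x'\ge x$ imply $x'\xrightarrow{w}y'\ge y$ for some $w$). Strong monotonicity: $x\xrightarrow{a}y$, $x'\ge x$ imply $x'\xrightarrow{a}y'$, $y'\ge y$; strong-strict: additionally $x'>x$ yields such $y'>y$. Deterministic: at most one $a$-successor. Ideals: nonempty downward-closed directed subsets; $\mathrm{Idl}(X)$. Completion $\widehat{\mathcal{S}}=(\mathrm{Idl}(X),\Rightarrow_\Sigma,\subseteq)$, $I\xRightarrow{a}J$ iff $J$ is a $\subseteq$-maximal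 ideal included in $\downarrow\mathrm{Post}(I,a)$; when deterministic, $w(I)$ is the unique $J$ with $I\xRightarrow{w}J$ if defined. $w^\infty(I)=\bigcup_kw^k(I)$ if $I\subset w(I)$, else $I$. Levels: $\mathrm{Idl}_0(X)=\mathrm{Idl}(X)$, $\mathrm{Idl}_n(X)$ = unions of strictly increasing sequences in $\mathrm{Idl}_{n-1}(X)$; finitely many levels if some $\mathrm{Idl}_n(X)=\emptyset$. Very-WSTS: WSTS with strong monotonicity whose completion is a deterministic WSTS ($\subseteq$ a wqo on ideals) with strong-strict monotonicity, and $\mathrm{Idl}(X)$ has finitely many levels. Positivity: $w$ is positive for $x$ if $x\xrightarrow{w}z$ for some $z\ge x$; $w$ is positive if it is positive for every $x$ with $\mathrm{Post}(x,w)\ne\emptyset$; $\mathcal{S}$ is positive if every word that is positive for some state is positive. $y$ is repeatedly coverable from $x$ if there are $z_0,z_1,\ldots$ with $x\xrightarrow{*}z_0\xrightarrow{+}z_1\xrightarrow{+}\cdots$ and $z_i\ge y$ for all $i$. Ideal Karp-Miller algorithm on input $(\mathcal{S},I_0)$ (terminates for very-WSTS): builds a tree with node labels $(\mathrm{ideal}(c),\mathrm{numaccel}(c))$ and letter-labeled arcs, starting with root $(I_0,0)$. While a node $c:(I,n)$ is unmarked: if a proper ancestor has ideal $I$, mark $c$; otherwise, if a proper ancestor $c'$ has $\mathrm{ideal}(c')\subset I$ and $\mathrm{numaccel}(c')=n$, relabel $c$ by $(w^\infty(I),n+1)$ with $w$ the arc-label word from $c'$ to $c$; then, with $(I,n)$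 the current label, add for each $a$ with $a(I)$ defined a child $(a(I),n)$ via an $a$-arc; mark $c$. The stuttering automaton $\mathcal{A}_{I_0}$: states are the nodes of the returned tree, all accepting, initial state the root, transitions the arcs plus an $\varepsilon$-transition from each leaf $c$ to any ancestor $c'$ with $\mathrm{ideal}(c')=\mathrm{ideal}(c)$. Reading $w$ allows $\varepsilon$-transitions. *)

theory Defs
  imports Main
begin

text \<open>States are the elements of type 'x
  (so X = UNIV), letters are of type 'a (finite in the theorem), the transition
  relation is T a x y (x --a--> y), and le is the quasi-ordering.\<close>

fun steps :: "('a \<Rightarrow> 'x \<Rightarrow> 'x \<Rightarrow> bool) \<Rightarrow> 'a list \<Rightarrow> 'x \<Rightarrow> 'x \<Rightarrow> bool" where
  "steps T [] x y = (x = y)"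
| "steps T (a # w) x y = (\<exists>z. T a x z \<and> steps T w z y)"

definition qo_on :: "'x set \<Rightarrow> ('x \<Rightarrow> 'x \<Rightarrow> bool) \<Rightarrow> bool" where
  "qo_on S le \<longleftrightarrow> (\<forall>x\<in>S. le x x) \<and> (\<forall>x\<in>S. \<forall>y\<in>S. \<forall>z\<in>S. le x y \<longrightarrow> le y z \<longrightarrow> le x z)"

definition wqo_on :: "'x set \<Rightarrow> ('x \<Rightarrow> 'x \<Rightarrow> bool) \<Rightarrow> bool" where
  "wqo_on S le \<longleftrightarrow> qo_on S le \<and>
     (\<forall>f :: nat \<Rightarrow> 'x. (\<forall>i. f i \<in> S) \<longrightarrow> (\<exists>i j. i < j \<and> le (f i) (f j)))"

definition strictly :: "('x \<Rightarrow> 'x \<Rightarrow> bool) \<Rightarrow> 'x \<Rightarrow> 'x \<Rightarrow> bool" where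
  "strictly le x y \<longleftrightarrow> le x y \<and> \<not> le y x"

definition monotone_ts :: "'x set \<Rightarrow> ('a \<Rightarrow> 'x \<Rightarrow> 'x \<Rightarrow> bool) \<Rightarrow> ('x \<Rightarrow> 'x \<Rightarrow> bool) \<Rightarrow> bool" where
  "monotone_ts S T le \<longleftrightarrow> (\<forall>a x y x'. x \<in> S \<longrightarrow> y \<in> S \<longrightarrow> x' \<in> S \<longrightarrow> T a x y \<longrightarrow> le x x' \<longrightarrow>
      (\<exists>w y'. y' \<in> S \<and> steps T w x' y' \<and> le y y'))"

definition strong_mono :: "'x set \<Rightarrow> ('a \<Rightarrow> 'x \<Rightarrow> 'x \<Rightarrow> bool) \<Rightarrow> ('x \<Rightarrow> 'x \<Rightarrow> bool) \<Rightarrow> bool" where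
  "strong_mono S T le \<longleftrightarrow> (\<forall>a x y x'. x \<in> S \<longrightarrow> y \<in> S \<longrightarrow> x' \<in> S \<longrightarrow> T a x y \<longrightarrow> le x x' \<longrightarrow>
      (\<exists>y'. y' \<in> S \<and> T a x' y' \<and> le y y'))"

definition strong_strict_mono :: "'x set \<Rightarrow> ('a \<Rightarrow> 'x \<Rightarrow> 'x \<Rightarrow> bool) \<Rightarrow> ('x \<Rightarrow> 'x \<Rightarrow> bool) \<Rightarrow> bool" where
  "strong_strict_mono S T le \<longleftrightarrow> strong_mono S T le \<and>
     (\<forall>a x y x'. x \<in> S \<longrightarrow> y \<in> S \<longrightarrow> x' \<in> S \<longrightarrow> T a x y \<longrightarrow> strictly le x x' \<longrightarrow>
      (\<exists>y'. y' \<in> S \<and> T a x' y' \<and> strictly le y y'))"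

definition deterministic :: "('a \<Rightarrow> 'x \<Rightarrow> 'x \<Rightarrow> bool) \<Rightarrow> bool" where
  "deterministic T \<longleftrightarrow> (\<forall>a x y z. T a x y \<longrightarrow> T a x z \<longrightarrow> y = z)"

definition WSTS_on :: "'x set \<Rightarrow> ('a \<Rightarrow> 'x \<Rightarrow> 'x \<Rightarrow> bool) \<Rightarrow> ('x \<Rightarrow> 'x \<Rightarrow> bool) \<Rightarrow> bool" where
  "WSTS_on S T le \<longleftrightarrow> wqo_on S le \<and> monotone_ts S T le"

definition dc :: "('x \<Rightarrow> 'x \<Rightarrow> bool) \<Rightarrow> 'x set \<Rightarrow> 'x set" where
  "dc le D = {x. \<exists>y\<in>D. le x y}"

definition down_closed :: "('x \<Rightarrow> 'x \<Rightarrow> bool) \<Rightarrow> 'x set \<Rightarrow> bool" where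
  "down_closed le D \<longleftrightarrow> (\<forall>x y. y \<in> D \<longrightarrow> le x y \<longrightarrow> x \<in> D)"

definition directed :: "('x \<Rightarrow> 'x \<Rightarrow> bool) \<Rightarrow> 'x set \<Rightarrow> bool" where
  "directed le D \<longleftrightarrow> (\<forall>x\<in>D. \<forall>y\<in>D. \<exists>z\<in>D. le x z \<and> le y z)"

definition Idl :: "('x \<Rightarrow> 'x \<Rightarrow> bool) \<Rightarrow> 'x set set" where
  "Idl le = {D. D \<noteq> {} \<and> down_closed le D \<and> directed le D}"

definition Post :: "('a \<Rightarrow> 'x \<Rightarrow> 'x \<Rightarrow> bool) \<Rightarrow> 'x set \<Rightarrow> 'a \<Rightarrow> 'x set" where
  "Post T I a = {y. \<exists>x\<in>I. T a x y}"

definition cstep :: "('a \<Rightarrow> 'x \<Rightarrow> 'x \<Rightarrow> bool) \<Rightarrow> ('x \<Rightarrow> 'x \<Rightarrow> bool) \<Rightarrow> 'a \<Rightarrow> 'x set \<Rightarrow> 'x set \<Rightarrow> bool" where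
  "cstep T le a I J \<longleftrightarrow> I \<in> Idl le \<and> J \<in> Idl le \<and> J \<subseteq> dc le (Post T I a) \<and>
     (\<forall>K\<in>Idl le. J \<subseteq> K \<longrightarrow> K \<subseteq> dc le (Post T I a) \<longrightarrow> K = J)"

fun Idl_level :: "('x \<Rightarrow> 'x \<Rightarrow> bool) \<Rightarrow> nat \<Rightarrow> 'x set set" where
  "Idl_level le 0 = Idl le"
| "Idl_level le (Suc n) =
     {\<Union> (range f) | f. (\<forall>i. f i \<in> Idl_level le n) \<and> (\<forall>i. f i \<subset> f (Suc i))}"

definition very_WSTS :: "('a \<Rightarrow> 'x \<Rightarrow> 'x \<Rightarrow> bool) \<Rightarrow> ('x \<Rightarrow> 'x \<Rightarrow> bool) \<Rightarrow> bool" where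
  "very_WSTS T le \<longleftrightarrow> WSTS_on UNIV T le \<and> strong_mono UNIV T le \<and>
     deterministic (cstep T le) \<and> WSTS_on (Idl le) (cstep T le) (\<subseteq>) \<and>
     strong_strict_mono (Idl le) (cstep T le) (\<subseteq>) \<and> (\<exists>n. Idl_level le n = {})"

text \<open>a(I) and w(I) in the (deterministic) completion; None = undefined.\<close>
definition capp :: "('a \<Rightarrow> 'x \<Rightarrow> 'x \<Rightarrow> bool) \<Rightarrow> ('x \<Rightarrow> 'x \<Rightarrow> bool) \<Rightarrow> 'a \<Rightarrow> 'x set \<Rightarrow> 'x set option" where
  "capp T le a I = (if \<exists>J. cstep T le a I J then Some (THE J. cstep T le a I J) else None)"

fun wapp :: "('a \<Rightarrow> 'x \<Rightarrow> 'x \<Rightarrow> bool) \<Rightarrow> ('x \<Rightarrow> 'x \<Rightarrow> bool) \<Rightarrow> 'a list \<Rightarrow> 'x set \<Rightarrow> 'x set option" where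
  "wapp T le [] I = Some I"
| "wapp T le (a # w) I = (case capp T le a I of None \<Rightarrow> None | Some J \<Rightarrow> wapp T le w J)"

definition winf :: "('a \<Rightarrow> 'x \<Rightarrow> 'x \<Rightarrow> bool) \<Rightarrow> ('x \<Rightarrow> 'x \<Rightarrow> bool) \<Rightarrow> 'a list \<Rightarrow> 'x set \<Rightarrow> 'x set" where
  "winf T le w I = (if \<exists>J. wapp T le w I = Some J \<and> I \<subset> J
       then \<Union> {K. \<exists>k. wapp T le (concat (replicate k w)) I = Some K}
       else I)"

definition positive_for :: "('a \<Rightarrow> 'x \<Rightarrow> 'x \<Rightarrow> bool) \<Rightarrow> ('x \<Rightarrow> 'x \<Rightarrow> bool) \<Rightarrow> 'a list \<Rightarrow> 'x \<Rightarrow> bool" where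
  "positive_for T le w x \<longleftrightarrow> (\<exists>z. steps T w x z \<and> le x z)"

definition positive_word :: "('a \<Rightarrow> 'x \<Rightarrow> 'x \<Rightarrow> bool) \<Rightarrow> ('x \<Rightarrow> 'x \<Rightarrow> bool) \<Rightarrow> 'a list \<Rightarrow> bool" where
  "positive_word T le w \<longleftrightarrow> (\<forall>x. (\<exists>y. steps T w x y) \<longrightarrow> positive_for T le w x)"

definition positive_ts :: "('a \<Rightarrow> 'x \<Rightarrow> 'x \<Rightarrow> bool) \<Rightarrow> ('x \<Rightarrow> 'x \<Rightarrow> bool) \<Rightarrow> bool" where
  "positive_ts T le \<longleftrightarrow> (\<forall>w. (\<exists>x. positive_for T le w x) \<longrightarrow> positive_word T le w)"

definition rep_coverable :: "('a \<Rightarrow> 'x \<Rightarrow> 'x \<Rightarrow> bool) \<Rightarrow> ('x \<Rightarrow> 'x \<Rightarrow> bool) \<Rightarrow> 'x \<Rightarrow> 'x \<Rightarrow> bool" where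
  "rep_coverable T le x y \<longleftrightarrow> (\<exists>z :: nat \<Rightarrow> 'x.
      (\<exists>w. steps T w x (z 0)) \<and>
      (\<forall>i. \<exists>w. w \<noteq> [] \<and> steps T w (z i) (z (Suc i))) \<and>
      (\<forall>i. le y (z i)))"

text \<open>A tree is represented by its set N of nodes, each node being the word of arc
  labels from the root (so [] is the root, u @ [a] is the a-child of u), together
  with the final labelling lab u = (ideal u, numaccel u).
  km_pre gives the label a node receives when it is created (before processing).\<close>

definition km_pre :: "('a \<Rightarrow> 'x \<Rightarrow> 'x \<Rightarrow> bool) \<Rightarrow> ('x \<Rightarrow> 'x \<Rightarrow> bool) \<Rightarrow> 'x set \<Rightarrow>
    ('a list \<Rightarrow> 'x set \<times> nat) \<Rightarrow> 'a list \<Rightarrow> 'x set \<times> nat" where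
  "km_pre T le I0 lab u = (if u = [] then (I0, 0)
     else (the (capp T le (last u) (fst (lab (butlast u)))), snd (lab (butlast u))))"

definition proper_anc :: "'a list \<Rightarrow> 'a list \<Rightarrow> bool" where
  "proper_anc v u \<longleftrightarrow> (\<exists>w. w \<noteq> [] \<and> u = v @ w)"

text \<open>Node u is marked without expansion because a proper ancestor has the same ideal.\<close>
definition km_rep :: "('a \<Rightarrow> 'x \<Rightarrow> 'x \<Rightarrow> bool) \<Rightarrow> ('x \<Rightarrow> 'x \<Rightarrow> bool) \<Rightarrow> 'x set \<Rightarrow>
    ('a list \<Rightarrow> 'x set \<times> nat) \<Rightarrow> 'a list \<Rightarrow> bool" where
  "km_rep T le I0 lab u \<longleftrightarrow> (\<exists>v. proper_anc v u \<and> fst (lab v) = fst (km_pre T le I0 lab u))"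

text \<open>(N, lab) is a tree returned by the Ideal Karp-Miller algorithm on (S, I0)
  (for some resolution of the choice of the ancestor used for acceleration).\<close>
definition km_tree :: "('a \<Rightarrow> 'x \<Rightarrow> 'x \<Rightarrow> bool) \<Rightarrow> ('x \<Rightarrow> 'x \<Rightarrow> bool) \<Rightarrow> 'x set \<Rightarrow>
    'a list set \<Rightarrow> ('a list \<Rightarrow> 'x set \<times> nat) \<Rightarrow> bool" where
  "km_tree T le I0 N lab \<longleftrightarrow>
     finite N \<and> [] \<in> N \<and>
     (\<forall>u a. u @ [a] \<in> N \<longrightarrow> u \<in> N) \<and>
     (\<forall>u\<in>N. \<forall>a. u @ [a] \<in> N \<longleftrightarrow> \<not> km_rep T le I0 lab u \<and> capp T le a (fst (lab u)) \<noteq> None) \<and>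
     (\<forall>u\<in>N. let I = fst (km_pre T le I0 lab u); n = snd (km_pre T le I0 lab u) in
        (if km_rep T le I0 lab u then lab u = (I, n)
         else if (\<exists>v. proper_anc v u \<and> fst (lab v) \<subset> I \<and> snd (lab v) = n)
         then (\<exists>v w. w \<noteq> [] \<and> u = v @ w \<and> fst (lab v) \<subset> I \<and> snd (lab v) = n \<and>
                     lab u = (winf T le w I, n + 1))
         else lab u = (I, n)))"

definition km_leaf :: "'a list set \<Rightarrow> 'a list \<Rightarrow> bool" where
  "km_leaf N u \<longleftrightarrow> u \<in> N \<and> (\<forall>a. u @ [a] \<notin> N)"

text \<open>Transitions: Some a = arc labelled a, None = epsilon-transition.\<close>
definition aut_step :: "'a list set \<Rightarrow> ('a list \<Rightarrow> 'x set \<times> nat) \<Rightarrow> 'a option \<Rightarrow> 'a list \<Rightarrow> 'a list \<Rightarrow> bool" where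
  "aut_step N lab l u v \<longleftrightarrow> (case l of
      Some a \<Rightarrow> u \<in> N \<and> v = u @ [a] \<and> v \<in> N
    | None \<Rightarrow> km_leaf N u \<and> proper_anc v u \<and> fst (lab v) = fst (lab u))"

inductive aut_reads :: "'a list set \<Rightarrow> ('a list \<Rightarrow> 'x set \<times> nat) \<Rightarrow> 'a list \<Rightarrow> 'a list \<Rightarrow> 'a list \<Rightarrow> bool"
  for N lab where
  nil: "c \<in> N \<Longrightarrow> aut_reads N lab [] c c"
| eps: "aut_step N lab None c c' \<Longrightarrow> aut_reads N lab w c' d \<Longrightarrow> aut_reads N lab w c d"
| letter: "aut_step N lab (Some a) c c' \<Longrightarrow> aut_reads N lab w c' d \<Longrightarrow> aut_reads N lab (a # w) c d"

end

theory Submission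
  imports Defs "HOL-Library.Infinite_Set"
begin

text \<open>Every run of the system from x is simulated by the stuttering automaton: a state in
  the ideal of a node stays in the ideal of the node reached by reading the same letters,
  the epsilon-moves from repeat leaves taking over where the tree stops. Given a run that
  covers y infinitely often, pigeonhole and the wqo yield two positions on one node with
  growing states; the word read in between is positive for a state, hence positive.
  Conversely, along a path of the automaton without acceleration the ideals are computed
  by the completion, so the word is executable from a state of the start ideal; every ideal
  of the tree lies below the states reachable from x, and monotonicity and positivity let
  the word be iterated forever from a reachable state above y.\<close>

definition Post_star :: "('a \<Rightarrow> 'x \<Rightarrow> 'x \<Rightarrow> bool) \<Rightarrow> 'x \<Rightarrow> 'x set" where
  "Post_star T x = {r. \<exists>w. steps T w x r}"

lemma steps_append: "steps T (u @ v) s t \<longleftrightarrow> (\<exists>m. steps T u s m \<and> steps T v m t)"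
  by (induction u arbitrary: s) auto

lemma steps_strong_mono:
  assumes "strong_mono UNIV T le" and "steps T w s s'" and "le s t"
  shows "\<exists>t'. steps T w t t' \<and> le s' t'"
  using assms(2,3)
proof (induction w arbitrary: s t)
  case (Cons a w)
  then obtain m where m: "T a s m" "steps T w m s'" by auto
  obtain m' where m': "T a t m'" "le m m'"
    using assms(1) m(1) \<open>le s t\<close> unfolding strong_mono_def by blast
  obtain t' where "steps T w m' t'" "le s' t'"
    using Cons.IH[OF m(2) m'(2)] by blast
  with m'(1) show ?case by auto
qed simp

lemma wapp_append:
  "wapp T le (u @ v) I = (case wapp T le u I of None \<Rightarrow> None | Some J \<Rightarrow> wapp T le v J)"
  by (induction u arbitrary: I) (auto split: option.splits)

lemma chain_Union_Idl:
  assumes "C \<noteq> {}" and "C \<subseteq> Idl le" and "\<forall>A\<in>C. \<forall>B\<in>C. A \<subseteq> B \<or> B \<subseteq> A"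
  shows "\<Union>C \<in> Idl le"
proof -
  have "directed le (\<Union>C)"
    unfolding directed_def
  proof (intro ballI)
    fix a b assume "a \<in> \<Union>C" "b \<in> \<Union>C"
    then obtain A B where AB: "A \<in> C" "B \<in> C" "a \<in> A" "b \<in> B" by blast
    with assms(3) consider "a \<in> B" | "b \<in> A" by blast
    then show "\<exists>z\<in>\<Union>C. le a z \<and> le b z"
      by cases (use AB assms(2) in \<open>unfold Idl_def directed_def, blast+\<close>)
  qed
  with assms(1,2) show ?thesis
    unfolding Idl_def down_closed_def by blast
qed

lemma Idl_level_subset_Idl: "Idl_level le k \<subseteq> Idl le"
proof (induction k)
  case (Suc k)
  show ?case
  proof
    fix J assume "J \<in> Idl_level le (Suc k)"
    then obtain f where f: "J = \<Union>(range f)" "\<forall>i. f i \<in> Idl_level le k" "\<forall>i. f i \<subset> f (Suc i)"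
      by auto
    then have "mono f"
      by (simp add: mono_iff_le_Suc less_imp_le)
    then have "\<forall>A\<in>range f. \<forall>B\<in>range f. A \<subseteq> B \<or> B \<subseteq> A"
      by (metis imageE monoD nle_le)
    with f Suc.IH show "J \<in> Idl le"
      using chain_Union_Idl[of "range f" le] by auto
  qed
qed simp

lemma Idl_level_empty_mono:
  assumes "Idl_level le n = {}" and "n \<le> m"
  shows "Idl_level le m = {}"
  using assms(2,1) by (induction m rule: dec_induct) auto

lemma dc_Post_Union_incseq:
  fixes f :: "nat \<Rightarrow> 'x set"
  assumes "mono f"
  shows "dc le (Post T (\<Union>(range f)) a) = (\<Union>i. dc le (Post T (f (i + i0)) a))"
proof -
  have "f i \<subseteq> f (i + i0)" for i
    using monoD[OF assms, of i "i + i0"] by simp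
  then show ?thesis
    unfolding dc_def Post_def by blast
qed

lemma wqo_repeated_value:
  fixes C :: "nat \<Rightarrow> 'c" and z :: "nat \<Rightarrow> 'x"
  assumes "wqo_on UNIV le" and "finite (range C)"
  shows "\<exists>i j. i < j \<and> C i = C j \<and> le (z i) (z j)"
proof -
  obtain c where S: "infinite {i. C i = c}"
    using pigeonhole_infinite[OF infinite_UNIV_nat assms(2)] by auto
  let ?h = "enumerate {i. C i = c}"
  have "\<forall>f :: nat \<Rightarrow> 'x. \<exists>i j. i < j \<and> le (f i) (f j)"
    using assms(1) unfolding wqo_on_def by blast
  from spec[OF this, of "\<lambda>k. z (?h k)"] obtain i j where "i < j" "le (z (?h i)) (z (?h j))"
    by blast
  moreover have "C (?h i) = C (?h j)"
    using enumerate_in_set[OF S] by simp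
  ultimately show ?thesis
    using enumerate_mono[OF _ S] by blast
qed

lemma rep_coverable_if_positive_loop:
  assumes "qo_on UNIV le" and "strong_mono UNIV T le"
    and "positive_word T le w" and "w \<noteq> []"
    and "r \<in> Post_star T x" and "steps T w r g" and "le y r"
  shows "rep_coverable T le x y"
proof -
  have trans: "le a b \<Longrightarrow> le b c \<Longrightarrow> le a c" for a b c
    using assms(1) unfolding qo_on_def by blast
  have "\<exists>s'. le r s' \<and> steps T w s s' \<and> le s s'" if rs: "le r s" for s
  proof -
    obtain g' where "steps T w s g'"
      using steps_strong_mono[OF assms(2,6) rs] by blast
    then obtain s' where "steps T w s s'" "le s s'"
      using assms(3) unfolding positive_word_def positive_for_def by blast
    with rs trans show ?thesis by blast
  qed
  moreover have "le r r"
    using assms(1) unfolding qo_on_def by blast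
  ultimately obtain Z where Z: "\<forall>n. (le r (Z n) \<and> (n = 0 \<longrightarrow> Z n = r)) \<and> steps T w (Z n) (Z (Suc n))"
    using dependent_nat_choice[of "\<lambda>n s. le r s \<and> (n = 0 \<longrightarrow> s = r)" "\<lambda>n s s'. steps T w s s'"]
    by blast
  show ?thesis
    unfolding rep_coverable_def
  proof (intro exI[of _ Z] conjI allI)
    show "\<exists>p. steps T p x (Z 0)"
      using Z assms(5) unfolding Post_star_def by auto
  next
    show "\<exists>u. u \<noteq> [] \<and> steps T u (Z i) (Z (Suc i))" for i
      using Z assms(4) by blast
  next
    show "le y (Z i)" for i
      using Z assms(7) trans by blast
  qed
qed

locale very_wsts =
  fixes T :: "'a \<Rightarrow> 'x \<Rightarrow> 'x \<Rightarrow> bool" and le :: "'x \<Rightarrow> 'x \<Rightarrow> bool"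
  assumes very_WSTS: "very_WSTS T le"
begin

lemma wqo: "wqo_on UNIV le"
  and strong_mono: "strong_mono UNIV T le"
  and Idl_level_vanishes: "\<exists>n. Idl_level le n = {}"
  using very_WSTS unfolding very_WSTS_def WSTS_on_def by blast+

lemma qo: "qo_on UNIV le"
  using wqo unfolding wqo_on_def by blast

lemma cstep_deterministic: "cstep T le a I J \<Longrightarrow> cstep T le a I J' \<Longrightarrow> J = J'"
  using very_WSTS unfolding very_WSTS_def deterministic_def by blast

lemma qo_refl: "le s s"
  and qo_trans: "le r s \<Longrightarrow> le s t \<Longrightarrow> le r t"
  using qo unfolding qo_on_def by blast+

lemma cstep_Idl: "cstep T le a I J \<Longrightarrow> I \<in> Idl le \<and> J \<in> Idl le"
  unfolding cstep_def by blast

lemma cstep_strict_mono: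
  assumes "cstep T le a I J" and "I' \<in> Idl le" and "I \<subset> I'"
  shows "\<exists>J'. cstep T le a I' J' \<and> J \<subset> J'"
proof -
  have "strong_strict_mono (Idl le) (cstep T le) (\<subseteq>)"
    using very_WSTS unfolding very_WSTS_def by blast
  then have "\<exists>J'. J' \<in> Idl le \<and> cstep T le a I' J' \<and> strictly (\<subseteq>) J J'"
    unfolding strong_strict_mono_def
    using assms cstep_Idl[OF assms(1)] strictly_def[of "(\<subseteq>)" I I'] by blast
  then show ?thesis
    unfolding strictly_def by blast
qed

lemma dc_singleton_Idl: "dc le {s} \<in> Idl le"
  unfolding Idl_def dc_def down_closed_def directed_def
  using qo_refl qo_trans by blast

lemma cstep_containing_Post:
  assumes I: "I \<in> Idl le" and p: "p \<in> Post T I a"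
  shows "\<exists>J. cstep T le a I J \<and> p \<in> J"
proof -
  let ?D = "dc le (Post T I a)"
  let ?A = "{K \<in> Idl le. dc le {p} \<subseteq> K \<and> K \<subseteq> ?D}"
  have p_D: "dc le {p} \<subseteq> ?D"
    using p unfolding dc_def by blast
  have "\<forall>C\<in>chains ?A. \<exists>U\<in>?A. \<forall>X\<in>C. X \<subseteq> U"
  proof
    fix C assume C: "C \<in> chains ?A"
    show "\<exists>U\<in>?A. \<forall>X\<in>C. X \<subseteq> U"
    proof (cases "C = {}")
      case True
      have "dc le {p} \<in> ?A"
        using dc_singleton_Idl p_D by blast
      with True show ?thesis by blast
    next
      case False
      have "\<Union>C \<in> Idl le"
        by (rule chain_Union_Idl[OF False]) (use C in \<open>auto simp: chains_def chain_subset_def\<close>)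
      moreover have "dc le {p} \<subseteq> \<Union>C" "\<Union>C \<subseteq> ?D"
        using C False unfolding chains_def by blast+
      ultimately show ?thesis by blast
    qed
  qed
  from Zorn_Lemma2[OF this] obtain M where M: "M \<in> ?A" "\<forall>X\<in>?A. M \<subseteq> X \<longrightarrow> X = M"
    by blast
  then have "cstep T le a I M"
    unfolding cstep_def using I by blast
  moreover have "p \<in> M"
    using M qo_refl unfolding dc_def by blast
  ultimately show ?thesis by blast
qed

lemma capp_eq_Some_iff: "capp T le a I = Some J \<longleftrightarrow> cstep T le a I J"
proof
  assume c: "cstep T le a I J"
  then have "(THE J. cstep T le a I J) = J"
    by (rule the_equality) (rule cstep_deterministic[OF _ c])
  with c show "capp T le a I = Some J"
    unfolding capp_def by auto
next
  assume c: "capp T le a I = Some J"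
  then obtain J' where J': "cstep T le a I J'"
    unfolding capp_def by (auto split: if_splits)
  then have "(THE J. cstep T le a I J) = J'"
    by (rule the_equality) (rule cstep_deterministic[OF _ J'])
  with J' have "capp T le a I = Some J'"
    unfolding capp_def by auto
  with c J' show "cstep T le a I J"
    by simp
qed

lemma wapp_Cons_eq_Some:
  "wapp T le (a # w) I = Some K \<longleftrightarrow> (\<exists>J. cstep T le a I J \<and> wapp T le w J = Some K)"
  by (auto simp: capp_eq_Some_iff[symmetric] split: option.splits)

lemma cstep_eq_dc_Post:
  assumes c: "cstep T le a I J"
  shows "J = dc le (Post T I a)"
proof
  show "J \<subseteq> dc le (Post T I a)"
    using c unfolding cstep_def by blast
  show "dc le (Post T I a) \<subseteq> J"
  proof
    fix q assume "q \<in> dc le (Post T I a)"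
    then obtain p where p: "p \<in> Post T I a" "le q p"
      unfolding dc_def by blast
    obtain J' where "cstep T le a I J'" "p \<in> J'"
      using cstep_containing_Post[OF _ p(1)] cstep_Idl[OF c] by blast
    then have "p \<in> J"
      using cstep_deterministic[OF c] by simp
    with p(2) show "q \<in> J"
      using cstep_Idl[OF c] unfolding Idl_def down_closed_def by blast
  qed
qed

lemma cstep_dc_Post:
  assumes "I \<in> Idl le" and "Post T I a \<noteq> {}"
  shows "cstep T le a I (dc le (Post T I a))"
proof -
  obtain J where "cstep T le a I J"
    using assms cstep_containing_Post by blast
  with cstep_eq_dc_Post[OF this] show ?thesis by simp
qed

lemma Idl_level_cstep:
  assumes "J \<in> Idl_level le k" and "cstep T le a J J'"
  shows "J' \<in> Idl_level le k"
  using assms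
proof (induction k arbitrary: J J')
  case 0
  then show ?case by (simp add: cstep_def)
next
  case (Suc k)
  then obtain f where f: "J = \<Union>(range f)" "\<forall>i. f i \<in> Idl_level le k" "\<forall>i. f i \<subset> f (Suc i)"
    by auto
  have f_Idl: "f i \<in> Idl le" for i
    using f(2) Idl_level_subset_Idl by blast
  have "mono f"
    using f(3) by (simp add: mono_iff_le_Suc less_imp_le)
  have "J' \<noteq> {}"
    using Suc.prems(2) unfolding cstep_def Idl_def by blast
  then obtain i0 where "Post T (f i0) a \<noteq> {}"
    unfolding cstep_eq_dc_Post[OF Suc.prems(2)] f(1) dc_def Post_def by blast
  then have "Post T (f (i + i0)) a \<noteq> {}" for i
    using monoD[OF \<open>mono f\<close>, of i0 "i + i0"] unfolding Post_def by fastforce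
  define G where "G i = dc le (Post T (f (i + i0)) a)" for i
  have G_cstep: "cstep T le a (f (i + i0)) (G i)" for i
    unfolding G_def using cstep_dc_Post f_Idl \<open>\<And>i. Post T (f (i + i0)) a \<noteq> {}\<close> by blast
  have "G i \<subset> G (Suc i)" for i
  proof -
    have "f (i + i0) \<subset> f (Suc i + i0)"
      using f(3) by simp
    then obtain J'' where "cstep T le a (f (Suc i + i0)) J''" "G i \<subset> J''"
      using cstep_strict_mono[OF G_cstep[of i] f_Idl] by blast
    with cstep_deterministic[OF G_cstep[of "Suc i"]] show ?thesis by simp
  qed
  moreover have "J' = \<Union>(range G)"
    using cstep_eq_dc_Post[OF Suc.prems(2)] dc_Post_Union_incseq[OF \<open>mono f\<close>, of le T a i0]
    unfolding f(1) G_def by simp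
  moreover have "G i \<in> Idl_level le k" for i
    using Suc.IH f(2) G_cstep by blast
  ultimately show ?case
    by (auto intro!: exI[of _ G])
qed

lemma wapp_Idl_level:
  "I \<in> Idl_level le k \<Longrightarrow> wapp T le w I = Some K \<Longrightarrow> K \<in> Idl_level le k"
  by (induction w arbitrary: I) (auto simp del: wapp.simps(2) simp add: wapp_Cons_eq_Some intro: Idl_level_cstep)

lemma wapp_Idl: "I \<in> Idl le \<Longrightarrow> wapp T le w I = Some K \<Longrightarrow> K \<in> Idl le"
  using wapp_Idl_level[of I 0] by simp

lemma wapp_strict_mono:
  "wapp T le w I = Some K \<Longrightarrow> I \<subset> I' \<Longrightarrow> I' \<in> Idl le \<Longrightarrow>
    \<exists>K'. wapp T le w I' = Some K' \<and> K \<subset> K'"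
proof (induction w arbitrary: I I')
  case (Cons a w)
  then obtain J where J: "cstep T le a I J" "wapp T le w J = Some K"
    by (auto simp del: wapp.simps(2) simp add: wapp_Cons_eq_Some)
  obtain J' where J': "cstep T le a I' J'" "J \<subset> J'"
    using cstep_strict_mono[OF J(1) Cons.prems(3,2)] by blast
  then obtain K' where "wapp T le w J' = Some K'" "K \<subset> K'"
    using Cons.IH[OF J(2) J'(2)] cstep_Idl[OF J'(1)] by blast
  with J'(1) show ?case
    by (auto simp del: wapp.simps(2) simp add: wapp_Cons_eq_Some)
qed simp

lemma wapp_power_Suc:
  "wapp T le (concat (replicate (Suc j) w)) I = (case wapp T le (concat (replicate j w)) I of
     None \<Rightarrow> None | Some J \<Rightarrow> wapp T le w J)"
proof -
  have "concat (replicate (Suc j) w) = concat (replicate j w) @ w"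
    by (induction j) auto
  then show ?thesis
    by (simp add: wapp_append)
qed

lemma winf_Idl_level:
  assumes I: "I \<in> Idl_level le k" and "wapp T le w I = Some Q" and "I \<subset> Q"
  shows "winf T le w I \<in> Idl_level le (Suc k)"
proof -
  let ?W = "\<lambda>j. wapp T le (concat (replicate j w)) I"
  have chain: "\<exists>A B. ?W j = Some A \<and> ?W (Suc j) = Some B \<and> A \<subset> B" for j
  proof (induction j)
    case 0
    with assms show ?case by simp
  next
    case (Suc j)
    then obtain A B where AB: "?W j = Some A" "?W (Suc j) = Some B" "A \<subset> B"
      by blast
    have "I \<in> Idl le"
      using I Idl_level_subset_Idl by blast
    then have "B \<in> Idl le"
      using wapp_Idl AB(2) by blast
    moreover have "wapp T le w A = Some B"
      using AB(1,2) wapp_power_Suc[of j w I] by simp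
    ultimately obtain B' where B': "wapp T le w B = Some B'" "B \<subset> B'"
      using wapp_strict_mono[of w A B B] AB(3) by blast
    then have "?W (Suc (Suc j)) = Some B'"
      using AB(2) wapp_power_Suc[of "Suc j" w I] by simp
    with AB(2) B'(2) show ?case
      by blast
  qed
  define f where "f j = the (?W j)" for j
  have f: "?W j = Some (f j)" "f j \<subset> f (Suc j)" for j
    using chain[of j] unfolding f_def by auto
  then have "{K. \<exists>j. ?W j = Some K} = range f"
    by auto
  then have "winf T le w I = \<Union>(range f)"
    unfolding winf_def using assms(2,3) by auto
  moreover have "f j \<in> Idl_level le k" for j
    using f(1) wapp_Idl_level[OF I] by blast
  ultimately show ?thesis
    using f(2) by auto
qed

lemma subset_winf: "I \<subseteq> winf T le w I"
proof -
  have "wapp T le (concat (replicate 0 w)) I = Some I"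
    by simp
  then have "I \<subseteq> \<Union>{K. \<exists>k. wapp T le (concat (replicate k w)) I = Some K}"
    by blast
  then show ?thesis
    unfolding winf_def by simp
qed

lemma winf_Idl:
  assumes "I \<in> Idl le"
  shows "winf T le w I \<in> Idl le"
proof (cases "\<exists>Q. wapp T le w I = Some Q \<and> I \<subset> Q")
  case True
  then obtain Q where "wapp T le w I = Some Q" "I \<subset> Q"
    by blast
  then have "winf T le w I \<in> Idl_level le 1"
    using winf_Idl_level[of I 0 w Q] assms by simp
  then show ?thesis
    using Idl_level_subset_Idl by blast
next
  case False
  with assms show ?thesis
    unfolding winf_def by auto
qed

lemma cstep_subset_dc_Post_star:
  assumes "I \<subseteq> dc le (Post_star T x)" and "cstep T le a I J"
  shows "J \<subseteq> dc le (Post_star T x)"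
proof
  fix e assume "e \<in> J"
  then obtain q s where q: "le e q" "T a s q" "s \<in> I"
    using cstep_eq_dc_Post[OF assms(2)] unfolding dc_def Post_def by blast
  then obtain p r where "steps T p x r" "le s r"
    using assms(1) unfolding dc_def Post_star_def by blast
  moreover obtain r' where "T a r r'" "le q r'"
    using strong_mono q(2) \<open>le s r\<close> unfolding strong_mono_def by blast
  ultimately have "steps T (p @ [a]) x r'" "le e r'"
    using q(1) qo_trans by (auto simp: steps_append)
  then show "e \<in> dc le (Post_star T x)"
    unfolding dc_def Post_star_def by blast
qed

lemma wapp_subset_dc_Post_star:
  "I \<subseteq> dc le (Post_star T x) \<Longrightarrow> wapp T le w I = Some K \<Longrightarrow> K \<subseteq> dc le (Post_star T x)"
  by (induction w arbitrary: I) (auto simp del: wapp.simps(2) simp add: wapp_Cons_eq_Some dest: cstep_subset_dc_Post_star)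

lemma winf_subset_dc_Post_star:
  assumes "I \<subseteq> dc le (Post_star T x)"
  shows "winf T le w I \<subseteq> dc le (Post_star T x)"
proof -
  have "\<Union>{K. \<exists>k. wapp T le (concat (replicate k w)) I = Some K} \<subseteq> dc le (Post_star T x)"
    using wapp_subset_dc_Post_star[OF assms] by blast
  with assms show ?thesis
    unfolding winf_def by simp
qed

lemma wapp_executable:
  "I \<in> Idl le \<Longrightarrow> wapp T le w I = Some K \<Longrightarrow> \<exists>f\<in>I. \<exists>g. steps T w f g"
proof (induction w arbitrary: I)
  case Nil
  then show ?case by (auto simp: Idl_def)
next
  case (Cons a w)
  then obtain J where J: "cstep T le a I J" "wapp T le w J = Some K"
    by (auto simp del: wapp.simps(2) simp add: wapp_Cons_eq_Some)
  then obtain f g where f: "f \<in> J" "steps T w f g"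
    using Cons.IH[OF _ J(2)] cstep_Idl[OF J(1)] by blast
  then obtain q s where q: "le f q" "T a s q" "s \<in> I"
    using cstep_eq_dc_Post[OF J(1)] unfolding dc_def Post_def by blast
  obtain g' where "steps T w q g'"
    using steps_strong_mono[OF strong_mono f(2) q(1)] by blast
  with q(2,3) show ?case by auto
qed

end

locale km_tree_from = very_wsts T le for T :: "'a \<Rightarrow> 'x \<Rightarrow> 'x \<Rightarrow> bool" and le +
  fixes x0 :: 'x and N :: "'a list set" and lab :: "'a list \<Rightarrow> 'x set \<times> nat"
  assumes km_tree: "km_tree T le (dc le {x0}) N lab"
begin

abbreviation pre :: "'a list \<Rightarrow> 'x set \<times> nat" where "pre \<equiv> km_pre T le (dc le {x0}) lab"
abbreviation repeat :: "'a list \<Rightarrow> bool" where "repeat \<equiv> km_rep T le (dc le {x0}) lab"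
abbreviation ideal :: "'a list \<Rightarrow> 'x set" where "ideal u \<equiv> fst (lab u)"
abbreviation numaccel :: "'a list \<Rightarrow> nat" where "numaccel u \<equiv> snd (lab u)"

lemma finite_nodes: "finite N"
  and root_node: "[] \<in> N"
  and parent_node: "u @ [a] \<in> N \<Longrightarrow> u \<in> N"
  and child_node_iff:
    "u \<in> N \<Longrightarrow> u @ [a] \<in> N \<longleftrightarrow> \<not> repeat u \<and> capp T le a (ideal u) \<noteq> None"
  using km_tree unfolding km_tree_def by blast+

lemma lab_cases:
  assumes "u \<in> N"
  shows "if repeat u then lab u = pre u
    else if \<exists>v. proper_anc v u \<and> ideal v \<subset> fst (pre u) \<and> numaccel v = snd (pre u)
    then \<exists>v w. w \<noteq> [] \<and> u = v @ w \<and> ideal v \<subset> fst (pre u) \<and> numaccel v = snd (pre u) \<and>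
      lab u = (winf T le w (fst (pre u)), snd (pre u) + 1)
    else lab u = pre u"
  using km_tree[unfolded km_tree_def, THEN conjunct2, THEN conjunct2, THEN conjunct2,
      THEN conjunct2, THEN bspec, OF assms]
  unfolding Let_def prod.collapse .

lemma lab_root: "lab [] = (dc le {x0}, 0)"
  using lab_cases[OF root_node] unfolding km_rep_def proper_anc_def km_pre_def by simp

lemma prefix_node: "v @ w \<in> N \<Longrightarrow> v \<in> N"
  by (induction w rule: rev_induct) (auto dest: parent_node simp flip: append_assoc)

lemma lab_child:
  assumes "p @ [a] \<in> N"
  obtains J where "cstep T le a (ideal p) J" and "p \<in> N" and "\<not> repeat p"
    and "lab (p @ [a]) = (J, numaccel p) \<or>
      (\<exists>v w. w \<noteq> [] \<and> p @ [a] = v @ w \<and> ideal v \<subset> J \<and> numaccel v = numaccel p \<and>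
        lab (p @ [a]) = (winf T le w J, numaccel p + 1))"
proof -
  have p: "p \<in> N" and "\<not> repeat p"
    using assms parent_node child_node_iff by blast+
  obtain J where J: "capp T le a (ideal p) = Some J"
    using assms p child_node_iff by blast
  then have "pre (p @ [a]) = (J, numaccel p)"
    unfolding km_pre_def by simp
  then have "lab (p @ [a]) = (J, numaccel p) \<or>
      (\<exists>v w. w \<noteq> [] \<and> p @ [a] = v @ w \<and> ideal v \<subset> J \<and> numaccel v = numaccel p \<and>
        lab (p @ [a]) = (winf T le w J, numaccel p + 1))"
    using lab_cases[OF assms] by (auto split: if_splits)
  with that p \<open>\<not> repeat p\<close> J show ?thesis
    unfolding capp_eq_Some_iff by blast
qed

lemma ideal_Idl: "u \<in> N \<Longrightarrow> ideal u \<in> Idl le"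
proof (induction u rule: rev_induct)
  case Nil
  show ?case using lab_root dc_singleton_Idl by simp
next
  case (snoc a p)
  from snoc.prems show ?case
  proof (cases rule: lab_child)
    case (1 J)
    then have "J \<in> Idl le"
      using cstep_Idl by blast
    then show ?thesis
      using 1(4) winf_Idl by (elim disjE exE conjE) simp_all
  qed
qed

lemma ideal_subset_dc_Post_star: "u \<in> N \<Longrightarrow> ideal u \<subseteq> dc le (Post_star T x0)"
proof (induction u rule: rev_induct)
  case Nil
  have "x0 \<in> Post_star T x0"
    unfolding Post_star_def by (auto intro: exI[of _ "[]"])
  then show ?case
    using lab_root unfolding dc_def by auto
next
  case (snoc a p)
  from snoc.prems show ?case
  proof (cases rule: lab_child)
    case (1 J)
    then have "J \<subseteq> dc le (Post_star T x0)"
      using cstep_subset_dc_Post_star snoc.IH by blast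
    then show ?thesis
      using 1(4) winf_subset_dc_Post_star by (elim disjE exE conjE) simp_all
  qed
qed

lemma cstep_subset_ideal_child:
  assumes "p @ [a] \<in> N" and "cstep T le a (ideal p) J"
  shows "J \<subseteq> ideal (p @ [a])"
  using assms(1)
proof (cases rule: lab_child)
  case (1 J')
  then have "J' = J"
    using cstep_deterministic[OF assms(2)] by blast
  then show ?thesis
    using 1(4) subset_winf[of J] by (elim disjE exE conjE) simp_all
qed

lemma numaccel_along_branch:
  "v @ z \<in> N \<Longrightarrow> numaccel v \<le> numaccel (v @ z) \<and>
    (numaccel v = numaccel (v @ z) \<longrightarrow> wapp T le z (ideal v) = Some (ideal (v @ z)))"
proof (induction z rule: rev_induct)
  case (snoc a z)
  from snoc.prems have "(v @ z) @ [a] \<in> N" by simp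
  then show ?case
  proof (cases rule: lab_child)
    case (1 J)
    then have "capp T le a (ideal (v @ z)) = Some J"
      using capp_eq_Some_iff by blast
    with snoc.IH[OF 1(2)] show ?thesis
      using 1(4) by (elim disjE exE conjE) (simp_all add: wapp_append)
  qed
qed simp

lemma acceleration_strict:
  assumes "p @ [a] \<in> N" and "cstep T le a (ideal p) J"
    and "w \<noteq> []" and "p @ [a] = v @ w" and "ideal v \<subset> J" and "numaccel v = numaccel p"
  shows "\<exists>Q. wapp T le w J = Some Q \<and> J \<subset> Q"
proof -
  obtain w' b where "w = w' @ [b]"
    using assms(3) rev_exhaust by blast
  with assms(4) have w': "w = w' @ [a]" and p: "p = v @ w'"
    by auto
  have "wapp T le w' (ideal v) = Some (ideal p)"
    using numaccel_along_branch[of v w'] assms(1,6) p parent_node by auto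
  moreover have "capp T le a (ideal p) = Some J"
    using assms(2) capp_eq_Some_iff by blast
  ultimately have "wapp T le w (ideal v) = Some J"
    unfolding w' by (simp add: wapp_append)
  then show ?thesis
    using wapp_strict_mono assms(5) cstep_Idl[OF assms(2)] by blast
qed

lemma Idl_level_along_branch:
  "v @ z \<in> N \<Longrightarrow> ideal v \<in> Idl_level le k \<Longrightarrow>
    ideal (v @ z) \<in> Idl_level le (k + (numaccel (v @ z) - numaccel v))"
proof (induction z rule: rev_induct)
  case (snoc a z)
  from snoc.prems(1) have u: "(v @ z) @ [a] \<in> N" by simp
  then show ?case
  proof (cases rule: lab_child)
    case (1 J)
    let ?k = "k + (numaccel (v @ z) - numaccel v)"
    have J: "J \<in> Idl_level le ?k"
      using Idl_level_cstep[OF snoc.IH[OF 1(2) snoc.prems(2)] 1(1)] .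
    from 1(4) show ?thesis
    proof
      assume "lab ((v @ z) @ [a]) = (J, numaccel (v @ z))"
      with J show ?thesis by simp
    next
      assume "\<exists>v' w. w \<noteq> [] \<and> (v @ z) @ [a] = v' @ w \<and> ideal v' \<subset> J \<and>
        numaccel v' = numaccel (v @ z) \<and> lab ((v @ z) @ [a]) = (winf T le w J, numaccel (v @ z) + 1)"
      then obtain v' w where acc: "w \<noteq> []" "(v @ z) @ [a] = v' @ w" "ideal v' \<subset> J"
        "numaccel v' = numaccel (v @ z)"
        and lab: "lab ((v @ z) @ [a]) = (winf T le w J, numaccel (v @ z) + 1)"
        by blast
      obtain Q where "wapp T le w J = Some Q" "J \<subset> Q"
        using acceleration_strict[OF u 1(1) acc] by blast
      with J have "winf T le w J \<in> Idl_level le (Suc ?k)"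
        by (rule winf_Idl_level)
      moreover have "numaccel v \<le> numaccel (v @ z)"
        using numaccel_along_branch 1(2) by blast
      then have "Suc ?k = k + (numaccel (v @ z @ [a]) - numaccel v)"
        using lab by simp
      ultimately show ?thesis
        using lab by (metis append_assoc fst_conv)
    qed
  qed
qed simp

text \<open>Finitely many levels force an epsilon-move to keep the acceleration counter: an ancestor
  with the same ideal and a smaller counter would put that ideal on every level.\<close>

lemma numaccel_repeat_ancestor:
  assumes "u \<in> N" and "proper_anc v u" and "ideal v = ideal u"
  shows "numaccel v = numaccel u"
proof (rule ccontr)
  assume ne: "numaccel v \<noteq> numaccel u"
  obtain z where z: "u = v @ z"
    using assms(2) unfolding proper_anc_def by blast
  define m where "m = numaccel u - numaccel v"
  have "m \<ge> 1"
    using numaccel_along_branch[of v z] assms(1) z ne unfolding m_def by auto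
  have "ideal v \<in> Idl_level le (j * m)" for j
  proof (induction j)
    case 0
    show ?case using ideal_Idl prefix_node assms(1) z by simp
  next
    case (Suc j)
    then show ?case
      using Idl_level_along_branch[of v z "j * m"] assms(1,3) z unfolding m_def by (simp add: add.commute)
  qed
  moreover obtain n where "Idl_level le n = {}"
    using Idl_level_vanishes by blast
  moreover have "n \<le> n * m"
    using \<open>m \<ge> 1\<close> by simp
  ultimately show False
    using Idl_level_empty_mono[of le n "n * m"] by auto
qed

lemma aut_reads_numaccel:
  "aut_reads N lab w c d \<Longrightarrow> numaccel c \<le> numaccel d \<and>
    (numaccel c = numaccel d \<longrightarrow> wapp T le w (ideal c) = Some (ideal d))"
proof (induction rule: aut_reads.induct)
  case (eps c c' w d)
  then have "km_leaf N c" "proper_anc c' c" and ideal: "ideal c' = ideal c"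
    unfolding aut_step_def by auto
  then have "numaccel c' = numaccel c"
    using numaccel_repeat_ancestor unfolding km_leaf_def by blast
  with ideal eps.IH show ?case by simp
next
  case (letter a c c' w d)
  then have "c' = c @ [a]" "c' \<in> N"
    unfolding aut_step_def by auto
  with numaccel_along_branch[of c "[a]"] letter.IH show ?case
    by (auto split: option.splits)
qed simp

lemma aut_reads_append:
  "aut_reads N lab u c d \<Longrightarrow> aut_reads N lab v d e \<Longrightarrow> aut_reads N lab (u @ v) c e"
  by (induction rule: aut_reads.induct) (auto intro: aut_reads.intros)

lemma aut_reads_child:
  "c @ [a] \<in> N \<Longrightarrow> aut_reads N lab [a] c (c @ [a])"
  by (rule aut_reads.letter[OF _ aut_reads.nil]) (auto simp: aut_step_def dest: parent_node)

text \<open>At a repeat leaf the run continues from the ancestor with the same ideal, which was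
  expanded.\<close>

lemma aut_reads_simulates_step:
  assumes c: "c \<in> N" and "s \<in> ideal c" and "T a s s'"
  shows "\<exists>d \<in> N. aut_reads N lab [a] c d \<and> s' \<in> ideal d"
proof -
  obtain J where J: "cstep T le a (ideal c) J" "s' \<in> J"
    using cstep_containing_Post ideal_Idl[OF c] assms(2,3) unfolding Post_def by blast
  show ?thesis
  proof (cases "repeat c")
    case False
    then have "c @ [a] \<in> N"
      using child_node_iff[OF c] J(1) capp_eq_Some_iff by auto
    then show ?thesis
      using aut_reads_child cstep_subset_ideal_child J by blast
  next
    case True
    then obtain v where v: "proper_anc v c" "ideal v = ideal c"
      using lab_cases[OF c] unfolding km_rep_def by auto
    then obtain b z where "c = v @ b # z"
      unfolding proper_anc_def by (metis neq_Nil_conv)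
    then have "v @ [b] \<in> N"
      using prefix_node[of "v @ [b]" z] c by simp
    then have "v \<in> N" "\<not> repeat v"
      using parent_node child_node_iff by blast+
    then have va: "v @ [a] \<in> N"
      using child_node_iff J(1) v(2) capp_eq_Some_iff by auto
    have "aut_step N lab None c v"
      using c True child_node_iff v unfolding aut_step_def km_leaf_def by auto
    then have "aut_reads N lab [a] c (v @ [a])"
      using aut_reads.eps aut_reads_child[OF va] by blast
    then show ?thesis
      using va cstep_subset_ideal_child[OF va] J v(2) by auto
  qed
qed

lemma aut_reads_simulates_steps:
  "c \<in> N \<Longrightarrow> s \<in> ideal c \<Longrightarrow> steps T w s s' \<Longrightarrow>
    \<exists>d \<in> N. aut_reads N lab w c d \<and> s' \<in> ideal d"
proof (induction w arbitrary: c s)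
  case Nil
  then show ?case by (auto intro: aut_reads.nil)
next
  case (Cons a w)
  then obtain m where m: "T a s m" "steps T w m s'"
    by auto
  obtain d where d: "d \<in> N" "aut_reads N lab [a] c d" "m \<in> ideal d"
    using aut_reads_simulates_step[OF Cons.prems(1,2) m(1)] by blast
  obtain e where "e \<in> N" "aut_reads N lab w d e" "s' \<in> ideal e"
    using Cons.IH[OF d(1,3) m(2)] by blast
  then show ?case
    using aut_reads_append[OF d(2)] by auto
qed

lemma aut_run_of_run:
  assumes "c0 \<in> N" and "z 0 \<in> ideal c0" and run: "\<forall>i. \<exists>w. w \<noteq> [] \<and> steps T w (z i) (z (Suc i))"
  obtains C where "\<And>i. C i \<in> N \<and> z i \<in> ideal (C i)"
    and "\<And>i j. i < j \<Longrightarrow> \<exists>u. u \<noteq> [] \<and> steps T u (z i) (z j) \<and> aut_reads N lab u (C i) (C j)"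
proof -
  let ?P = "\<lambda>n c. c \<in> N \<and> z n \<in> ideal c"
  let ?Q = "\<lambda>n c d. \<exists>u. u \<noteq> [] \<and> steps T u (z n) (z (Suc n)) \<and> aut_reads N lab u c d"
  have "\<exists>d. ?P (Suc n) d \<and> ?Q n c d" if c: "?P n c" for n c
  proof -
    obtain u where u: "u \<noteq> []" "steps T u (z n) (z (Suc n))"
      using run by blast
    then obtain d where "d \<in> N" "aut_reads N lab u c d" "z (Suc n) \<in> ideal d"
      using aut_reads_simulates_steps[of c "z n" u "z (Suc n)"] c u(2) by blast
    with u show ?thesis
      by blast
  qed
  then obtain C where C: "\<forall>n. ?P n (C n) \<and> ?Q n (C n) (C (Suc n))"
    using dependent_nat_choice[of ?P ?Q] assms(1,2) by blast
  have path: "\<exists>u. u \<noteq> [] \<and> steps T u (z i) (z j) \<and> aut_reads N lab u (C i) (C j)"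
    if "Suc i \<le> j" for i j
    using that
  proof (induction j rule: dec_induct)
    case (step j)
    then obtain u where "u \<noteq> []" "steps T u (z i) (z j)" "aut_reads N lab u (C i) (C j)"
      by blast
    moreover obtain v where "steps T v (z j) (z (Suc j))" "aut_reads N lab v (C j) (C (Suc j))"
      using C by blast
    ultimately show ?case
      using aut_reads_append by (auto simp: steps_append intro!: exI[of _ "u @ v"])
  qed (use C in blast)
  show ?thesis
  proof (rule that)
    show "C i \<in> N \<and> z i \<in> ideal (C i)" for i
      using C by blast
    show "\<exists>u. u \<noteq> [] \<and> steps T u (z i) (z j) \<and> aut_reads N lab u (C i) (C j)" if "i < j" for i j
      using path that by (simp add: Suc_le_eq)
  qed
qed

lemma positive_cycle_of_rep_coverable:
  assumes "positive_ts T le" and "rep_coverable T le x0 y"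
  shows "\<exists>c w. c \<in> N \<and> w \<noteq> [] \<and> aut_reads N lab w c c \<and> positive_word T le w \<and> y \<in> ideal c"
proof -
  obtain z p where z: "steps T p x0 (z 0)" "\<forall>i. \<exists>w. w \<noteq> [] \<and> steps T w (z i) (z (Suc i))"
    "\<forall>i. le y (z i)"
    using assms(2) unfolding rep_coverable_def by blast
  have "x0 \<in> ideal []"
    using lab_root qo_refl unfolding dc_def by simp
  then obtain c0 where c0: "c0 \<in> N" "z 0 \<in> ideal c0"
    using aut_reads_simulates_steps[OF root_node _ z(1)] by blast
  obtain C where C: "\<And>i. C i \<in> N \<and> z i \<in> ideal (C i)"
    and path: "\<And>i j. i < j \<Longrightarrow> \<exists>u. u \<noteq> [] \<and> steps T u (z i) (z j) \<and> aut_reads N lab u (C i) (C j)"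
    using aut_run_of_run[OF c0 z(2)] by blast
  have "finite (range C)"
    using C finite_nodes by (meson finite_subset image_subsetI)
  then obtain i j where ij: "i < j" "C i = C j" "le (z i) (z j)"
    using wqo_repeated_value[OF wqo, of C z] by blast
  then obtain u where u: "u \<noteq> []" "steps T u (z i) (z j)" "aut_reads N lab u (C i) (C i)"
    using path[OF ij(1)] by auto
  have "positive_word T le u"
    using assms(1) u(2) ij(3) unfolding positive_ts_def positive_for_def by blast
  moreover have "y \<in> ideal (C i)"
    using C[of i] ideal_Idl[of "C i"] z(3) unfolding Idl_def down_closed_def by blast
  ultimately show ?thesis
    using C u by blast
qed

lemma rep_coverable_of_aut_path:
  assumes "aut_reads N lab w c d" and "numaccel c = numaccel d"
    and "positive_word T le w" and "w \<noteq> []" and "y \<in> ideal c"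
  shows "rep_coverable T le x0 y"
proof -
  have c: "c \<in> N"
    using assms(1) by (cases rule: aut_reads.cases) (auto simp: aut_step_def km_leaf_def)
  have "wapp T le w (ideal c) = Some (ideal d)"
    using aut_reads_numaccel assms(1,2) by blast
  then obtain f g where "f \<in> ideal c" "steps T w f g"
    using wapp_executable ideal_Idl[OF c] by blast
  moreover obtain m where "m \<in> ideal c" "le y m" "le f m"
    using ideal_Idl[OF c] assms(5) \<open>f \<in> ideal c\<close> unfolding Idl_def directed_def by blast
  moreover obtain r where "r \<in> Post_star T x0" "le m r"
    using ideal_subset_dc_Post_star[OF c] \<open>m \<in> ideal c\<close> unfolding dc_def by blast
  ultimately obtain g' where "steps T w r g'" "le y r"
    using steps_strong_mono[OF strong_mono \<open>steps T w f g\<close>, of r] qo_trans by blast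
  then show ?thesis
    using rep_coverable_if_positive_loop[OF qo strong_mono assms(3,4) \<open>r \<in> Post_star T x0\<close>] by blast
qed

end

theorem proposition17:
  fixes T :: "'a::finite \<Rightarrow> 'x \<Rightarrow> 'x \<Rightarrow> bool"
    and le :: "'x \<Rightarrow> 'x \<Rightarrow> bool"
    and x y :: 'x
    and N :: "'a list set"
    and lab :: "'a list \<Rightarrow> 'x set \<times> nat"
  assumes "very_WSTS T le"
    and "positive_ts T le"
    and "km_tree T le (dc le {x}) N lab"
  shows "rep_coverable T le x y \<longleftrightarrow>
    (\<exists>c d w. c \<in> N \<and> d \<in> N \<and> w \<noteq> [] \<and> aut_reads N lab w c d \<and>
       snd (lab c) = snd (lab d) \<and> positive_word T le w \<and> y \<in> fst (lab c))"
proof -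
  interpret km_tree_from T le x N lab
    using assms(1,3) by (simp add: km_tree_from_def km_tree_from_axioms_def very_wsts_def)
  show ?thesis
    using positive_cycle_of_rep_coverable[OF assms(2)] rep_coverable_of_aut_path by blast
qed

end
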